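(* Let $0\le q\in L_1^{loc}(\mathbb{R})$ and assume there is $a\in(0,\infty)$ with $\inf_{x\in\mathbb{R}}\int_{x-a}^{x+a}q(t)\,dt>0$. Suppose $q=q_1+q_2$ on $\mathbb{R}$ with $q_1>0$ continuous and $q_2\in L_1^{loc}(\mathbb{R})$, and that $\sigma_1(x)\to0$, $\sigma_2(x)\to0$ as $|x|\to\infty$, where $$\sigma_1(x)=\sup_{|z|\le2/q_1(x)}\Big|\int_0^z\big[q_1(x+t)-2q_1(x)+q_1(x-t)\big]dt\Big|,\qquad \sigma_2(x)=\sup_{|z|\le2/q_1(x)}\Big|\int_{x-z}^{x+z}q_2(t)\,dt\Big|.$$ If moreover $q_1(x)\to\infty$ as $|x|\to\infty$, then for every $p\in(1,\infty]$ the solutions of $-y'+qy=f$ tend in whole to zero as $|x|\to\infty$.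
   Context: $L_\infty(\mathbb{R})$ denotes $C(\mathbb{R})$ with the sup norm. $D_p$ is the set of all solutions $y\in L_p(\mathbb{R})$ of $-y'(x)+q(x)y(x)=f(x)$, $x\in\mathbb{R}$, with $f\in L_p(\mathbb{R})$, $\|f\|_p=1$. The solutions tend in whole to zero as $|x|\to\infty$ if for every $\varepsilon>0$ there is $x_0(\varepsilon)$ such that $|y(x)|\le\varepsilon$ for all $y\in D_p$ and all $|x|\ge x_0(\varepsilon)$. *)

theory Defs
  imports "HOL-Analysis.Analysis"
begin

definition loc_int :: "(real \<Rightarrow> real) \<Rightarrow> bool" where
  "loc_int g \<longleftrightarrow> (\<forall>a b. set_integrable lborel {a..b} g)"

text \<open>Membership in L_p for p in (1,infinity); for p = infinity, L_infinity denotes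
  the space C(R) of bounded continuous functions with the sup norm.\<close>
definition in_Lp :: "ereal \<Rightarrow> (real \<Rightarrow> real) \<Rightarrow> bool" where
  "in_Lp p g \<longleftrightarrow>
     (if p = \<infinity> then continuous_on UNIV g \<and> bounded (range g)
      else g \<in> borel_measurable lborel \<and>
           integrable lborel (\<lambda>x. \<bar>g x\<bar> powr real_of_ereal p))"

definition Lp_norm :: "ereal \<Rightarrow> (real \<Rightarrow> real) \<Rightarrow> real" where
  "Lp_norm p g =
     (if p = \<infinity> then (SUP x. \<bar>g x\<bar>)
      else (LINT x|lborel. \<bar>g x\<bar> powr real_of_ereal p) powr (1 / real_of_ereal p))"

text \<open>y is a (locally absolutely continuous) solution of -y' + q y = f on R,
  i.e. y' = q y - f almost everywhere.\<close>
definition is_solution :: "(real \<Rightarrow> real) \<Rightarrow> (real \<Rightarrow> real) \<Rightarrow> (real \<Rightarrow> real) \<Rightarrow> bool" where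
  "is_solution q f y \<longleftrightarrow>
     loc_int (\<lambda>t. q t * y t - f t) \<and>
     (\<forall>a b. a \<le> b \<longrightarrow> y b - y a = (LBINT t:{a..b}. q t * y t - f t))"

definition D_set :: "ereal \<Rightarrow> (real \<Rightarrow> real) \<Rightarrow> (real \<Rightarrow> real) set" where
  "D_set p q = {y. in_Lp p y \<and> (\<exists>f. in_Lp p f \<and> Lp_norm p f = 1 \<and> is_solution q f y)}"

definition tend_in_whole_to_zero :: "ereal \<Rightarrow> (real \<Rightarrow> real) \<Rightarrow> bool" where
  "tend_in_whole_to_zero p q \<longleftrightarrow>
     (\<forall>\<epsilon>>0. \<exists>x0. \<forall>y\<in>D_set p q. \<forall>x. \<bar>x\<bar> \<ge> x0 \<longrightarrow> \<bar>y x\<bar> \<le> \<epsilon>)"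

definition sigma1 :: "(real \<Rightarrow> real) \<Rightarrow> real \<Rightarrow> real" where
  "sigma1 q1 x = (SUP z\<in>{z. \<bar>z\<bar> \<le> 2 / q1 x}.
      \<bar>LBINT t=ereal 0..ereal z. q1 (x + t) - 2 * q1 x + q1 (x - t)\<bar>)"

definition sigma2 :: "(real \<Rightarrow> real) \<Rightarrow> (real \<Rightarrow> real) \<Rightarrow> real \<Rightarrow> real" where
  "sigma2 q1 q2 x = (SUP z\<in>{z. \<bar>z\<bar> \<le> 2 / q1 x}.
      \<bar>LBINT t=ereal (x - z)..ereal (x + z). q2 t\<bar>)"

end

theory Submission
  imports Defs
begin

text \<open>
  Far out, q1 is large while sigma1 and sigma2 are small. Since the integral of the second
  difference of q1 over [0, 1/q1 x] equals the q1-mass of [x - 1/q1 x, x + 1/q1 x] minus 2,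
  that window carries q1-mass close to 2 and q2-mass close to 0, hence q-mass at least 1.
  Stacking windows, the integral of q over [x, T] grows like K (T - x) - 1 for any prescribed
  slope K once |x| is large.

  For f of unit L_p norm, the pointwise inequality |f| <= eta |f|^p + B(eta) bounds the integral
  of |f| over [x, T] by eta + B (T - x). With K = 4 B / eps, the equation -y' + q y = f pushes
  a solution with |y x| > eps away from zero: |y T| >= eps/2 + eps/4 times the integral of q
  over [x, T] for all T >= x. This contradicts y being bounded (p = infinity) or
  p-integrable (p finite).
\<close>

lemma loc_int_integrable_on:
  assumes "loc_int g"
  shows "g integrable_on {a..b}" "(\<lambda>t. \<bar>g t\<bar>) integrable_on {a..b}"
    "(LBINT t:{a..b}. g t) = integral {a..b} g"
proof -
  have g: "set_integrable lborel {a..b} g"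
    using assms unfolding loc_int_def by blast
  show "g integrable_on {a..b}" "(LBINT t:{a..b}. g t) = integral {a..b} g"
    using set_borel_integral_eq_integral[OF g] by auto
  show "(\<lambda>t. \<bar>g t\<bar>) integrable_on {a..b}"
    using set_borel_integral_eq_integral(1)[OF set_integrable_abs[OF g]] by simp
qed

lemma integral_Icc_le_integral_lborel:
  fixes g :: "real \<Rightarrow> real"
  assumes g: "integrable lborel g" and g_nonneg: "\<And>x. 0 \<le> g x"
  shows "g integrable_on {a..b}" "integral {a..b} g \<le> (LINT x|lborel. g x)"
proof -
  have g_set: "set_integrable lborel {a..b} g"
    unfolding set_integrable_def by (rule integrable_mult_indicator) (use g in auto)
  note g_HK = set_borel_integral_eq_integral[OF g_set]
  show "g integrable_on {a..b}"
    by (rule g_HK(1))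
  show "integral {a..b} g \<le> (LINT x|lborel. g x)"
    unfolding g_HK(2)[symmetric] set_lebesgue_integral_def
    by (rule integral_mono) (use g_set g g_nonneg in \<open>auto simp: set_integrable_def indicator_def\<close>)
qed

lemma integral_cong_AE_lborel:
  fixes f g :: "real \<Rightarrow> real"
  assumes "AE x in lborel. f x = g x"
  shows "integral S f = integral S g"
proof -
  have "AE x in lborel. x \<in> S \<longrightarrow> f x = g x"
    using assms by eventually_elim simp
  then show ?thesis
    unfolding integral_def integrable_on_def by (simp add: has_integral_AE)
qed

lemma abs_interval_integral_le_integral_abs:
  fixes g :: "real \<Rightarrow> real"
  assumes g: "set_integrable lborel {c..d} g" and ab: "a \<in> {c..d}" "b \<in> {c..d}"
  shows "\<bar>LBINT t=ereal a..ereal b. g t\<bar> \<le> integral {c..d} (\<lambda>t. \<bar>g t\<bar>)"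
proof -
  have le: "\<bar>LBINT t=ereal u..ereal v. g t\<bar> \<le> integral {c..d} (\<lambda>t. \<bar>g t\<bar>)"
    if uv: "u \<le> v" "u \<in> {c..d}" "v \<in> {c..d}" for u v
  proof -
    have sub: "set_integrable lborel {u..v} g"
      by (rule set_integrable_subset[OF g]) (use uv in auto)
    note uv_int = set_borel_integral_eq_integral[OF sub]
      set_borel_integral_eq_integral(1)[OF set_integrable_abs[OF sub]]
    note cd_int = set_borel_integral_eq_integral(1)[OF set_integrable_abs[OF g]]
    have "\<bar>LBINT t=ereal u..ereal v. g t\<bar> = \<bar>integral {u..v} g\<bar>"
      using interval_integral_eq_integral[OF uv(1) sub] by simp
    also have "\<dots> \<le> integral {u..v} (\<lambda>t. \<bar>g t\<bar>)"
      using integral_norm_bound_integral[OF uv_int(1) uv_int(3)] by simp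
    also have "\<dots> \<le> integral {c..d} (\<lambda>t. \<bar>g t\<bar>)"
      by (rule integral_subset_le) (use uv uv_int cd_int in auto)
    finally show ?thesis .
  qed
  show ?thesis
  proof (cases "a \<le> b")
    case False
    then show ?thesis
      using le[of b a] ab by (simp add: interval_integral_endpoints_reverse[of a b])
  qed (use le ab in auto)
qed

lemma abs_interval_integral_le_SUP:
  fixes g :: "real \<Rightarrow> real"
  assumes g: "set_integrable lborel {c..d} g"
    and ends: "\<And>z. z \<in> Z \<Longrightarrow> a z \<in> {c..d} \<and> b z \<in> {c..d}" and z: "z \<in> Z"
  shows "\<bar>LBINT t=ereal (a z)..ereal (b z). g t\<bar>
    \<le> (SUP z\<in>Z. \<bar>LBINT t=ereal (a z)..ereal (b z). g t\<bar>)"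
proof (rule cSUP_upper[OF z])
  show "bdd_above ((\<lambda>z. \<bar>LBINT t=ereal (a z)..ereal (b z). g t\<bar>) ` Z)"
    using abs_interval_integral_le_integral_abs[OF g] ends by (auto intro!: bdd_aboveI2)
qed

lemma abs_interval_integral_le_sigma1:
  assumes q1: "continuous_on UNIV q1" and z: "\<bar>z\<bar> \<le> 2 / q1 x"
  shows "\<bar>LBINT t=ereal 0..ereal z. q1 (x + t) - 2 * q1 x + q1 (x - t)\<bar> \<le> sigma1 q1 x"
proof -
  let ?H = "2 / q1 x"
  have "0 \<le> ?H"
    using z abs_ge_zero order_trans by blast
  then have "0 \<le> q1 x"
    by (simp add: zero_le_divide_iff)
  have "continuous_on {-?H..?H} (\<lambda>t. q1 (x + t) - 2 * q1 x + q1 (x - t))"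
    by (intro continuous_intros continuous_on_compose2[OF q1]) auto
  then have "set_integrable lborel {-?H..?H} (\<lambda>t. q1 (x + t) - 2 * q1 x + q1 (x - t))"
    by (rule borel_integrable_atLeastAtMost')
  then show ?thesis
    unfolding sigma1_def
    by (rule abs_interval_integral_le_SUP[where a = "\<lambda>_. 0" and b = "\<lambda>z. z"])
      (use z \<open>0 \<le> q1 x\<close> in \<open>auto simp: abs_le_iff\<close>)
qed

lemma abs_interval_integral_le_sigma2:
  assumes q2: "loc_int q2" and z: "\<bar>z\<bar> \<le> 2 / q1 x"
  shows "\<bar>LBINT t=ereal (x - z)..ereal (x + z). q2 t\<bar> \<le> sigma2 q1 q2 x"
proof -
  let ?H = "2 / q1 x"
  have "set_integrable lborel {x - ?H..x + ?H} q2"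
    using q2 unfolding loc_int_def by blast
  then show ?thesis
    unfolding sigma2_def
    by (rule abs_interval_integral_le_SUP[where a = "\<lambda>z. x - z" and b = "\<lambda>z. x + z"])
      (use z in \<open>auto simp: abs_le_iff\<close>)
qed

lemma interval_integral_second_difference:
  fixes f :: "real \<Rightarrow> real"
  assumes f: "continuous_on UNIV f" and h: "0 \<le> h"
  shows "(LBINT t=ereal 0..ereal h. f (x + t) - 2 * f x + f (x - t))
    = integral {x - h..x + h} f - 2 * h * f x"
proof -
  define F where "F u = f (x + u)" for u
  have F_cont: "continuous_on S F" for S
    unfolding F_def by (intro continuous_on_compose2[OF f] continuous_intros) auto
  have F_int: "F integrable_on {a..b}" "(\<lambda>t. F (- t)) integrable_on {a..b}" for a b
    by (auto intro!: integrable_continuous_interval continuous_on_compose2[OF F_cont] continuous_intros)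
  have "integral {x - h..x + h} f = integral {-h..h} F"
    using integral_shift_Icc_real[of "-h" h f x] unfolding F_def o_def by (simp add: add.commute)
  also have "\<dots> = integral {-h..0} F + integral {0..h} F"
    using Henstock_Kurzweil_Integration.integral_combine[of "-h" 0 h F] h F_int by simp
  also have "integral {-h..0} F = integral {0..h} (\<lambda>t. F (- t))"
    using Henstock_Kurzweil_Integration.integral_reflect_real[of 0 "-h" F] by simp
  finally have sum: "integral {x - h..x + h} f = integral {0..h} (\<lambda>t. F t + F (- t))"
    using integral_add[OF F_int(1) F_int(2)] by simp
  have "set_integrable lborel {0..h} (\<lambda>t. f (x + t) - 2 * f x + f (x - t))"
    by (intro borel_integrable_atLeastAtMost' continuous_intros continuous_on_compose2[OF f]) auto
  then have "(LBINT t=ereal 0..ereal h. f (x + t) - 2 * f x + f (x - t))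
      = integral {0..h} (\<lambda>t. (F t + F (- t)) - 2 * f x)"
    using interval_integral_eq_integral[OF h] by (simp add: F_def algebra_simps)
  also have "\<dots> = integral {0..h} (\<lambda>t. F t + F (- t)) - 2 * h * f x"
    using integral_diff[OF integrable_add[OF F_int] integrable_const_ivl] h by simp
  finally show ?thesis
    using sum by simp
qed

lemma integral_window_ge_one:
  fixes q q1 q2 :: "real \<Rightarrow> real"
  assumes q1_cont: "continuous_on UNIV q1" and q1_pos: "0 < q1 x"
    and q2_loc: "loc_int q2" and q_split: "AE t in lborel. q t = q1 t + q2 t"
    and sigma1: "sigma1 q1 x \<le> 1/4" and sigma2: "sigma2 q1 q2 x \<le> 1/4"
  shows "1 \<le> integral {x - 1 / q1 x..x + 1 / q1 x} q"
proof -
  define h where "h = 1 / q1 x"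
  have h: "0 \<le> h" "\<bar>h\<bar> \<le> 2 / q1 x" "2 * h * q1 x = 2"
    using q1_pos by (auto simp: h_def divide_simps)
  have q1_int: "q1 integrable_on {x - h..x + h}"
    using q1_cont by (auto intro: integrable_continuous_interval continuous_on_subset)
  have "integral {x - h..x + h} q = integral {x - h..x + h} q1 + integral {x - h..x + h} q2"
    using integral_cong_AE_lborel[OF q_split] integral_add[OF q1_int loc_int_integrable_on(1)[OF q2_loc]]
    by simp
  moreover have "7/4 \<le> integral {x - h..x + h} q1"
    using interval_integral_second_difference[OF q1_cont h(1), of x]
      abs_interval_integral_le_sigma1[where x = x, OF q1_cont h(2)] sigma1 h(3) by linarith
  moreover have "-1/4 \<le> integral {x - h..x + h} q2"
    using interval_integral_eq_integral[of "x - h" "x + h" q2] h(1) q2_loc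
      abs_interval_integral_le_sigma2[where ?q1.0 = q1 and x = x, OF q2_loc h(2)] sigma2
    unfolding loc_int_def by force
  ultimately show ?thesis
    unfolding h_def by linarith
qed

lemma eventually_integral_interval_ge_one:
  fixes q q1 q2 :: "real \<Rightarrow> real"
  assumes q_nonneg: "\<forall>x. 0 \<le> q x" and q_loc: "loc_int q"
    and q1_pos: "\<forall>x. 0 < q1 x" and q1_cont: "continuous_on UNIV q1"
    and q2_loc: "loc_int q2" and q_split: "AE x in lborel. q x = q1 x + q2 x"
    and sigma1_lim: "(sigma1 q1 \<longlongrightarrow> 0) at_infinity"
    and sigma2_lim: "(sigma2 q1 q2 \<longlongrightarrow> 0) at_infinity"
    and q1_inf: "filterlim q1 at_top at_infinity" and \<delta>: "0 < \<delta>"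
  shows "eventually (\<lambda>x. 1 \<le> integral {x - \<delta>..x + \<delta>} q) at_infinity"
proof -
  have "eventually (\<lambda>x. 1 / \<delta> \<le> q1 x) at_infinity"
    using q1_inf unfolding filterlim_at_top by blast
  moreover have "eventually (\<lambda>x. \<bar>sigma1 q1 x\<bar> < 1/4) at_infinity"
    "eventually (\<lambda>x. \<bar>sigma2 q1 q2 x\<bar> < 1/4) at_infinity"
    using tendstoD[OF sigma1_lim, of "1/4"] tendstoD[OF sigma2_lim, of "1/4"]
    by (simp_all add: dist_real_def)
  ultimately show ?thesis
  proof eventually_elim
    case (elim x)
    have "1 \<le> integral {x - 1 / q1 x..x + 1 / q1 x} q"
      using integral_window_ge_one[OF q1_cont _ q2_loc q_split] q1_pos elim by auto
    also have "\<dots> \<le> integral {x - \<delta>..x + \<delta>} q"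
    proof (rule integral_subset_le)
      have "1 / q1 x \<le> \<delta>"
        using elim(1) \<delta> q1_pos by (simp add: divide_simps mult.commute)
      then show "{x - 1 / q1 x..x + 1 / q1 x} \<subseteq> {x - \<delta>..x + \<delta>}"
        by auto
    qed (use q_nonneg loc_int_integrable_on(1)[OF q_loc] in auto)
    finally show ?case .
  qed
qed

lemma integral_ge_number_of_blocks:
  fixes q :: "real \<Rightarrow> real"
  assumes q_nonneg: "\<forall>x. 0 \<le> q x" and q_int: "\<And>a b. q integrable_on {a..b}"
    and \<delta>: "0 \<le> \<delta>" and window: "\<And>x. R \<le> \<bar>x\<bar> \<Longrightarrow> 1 \<le> integral {x - \<delta>..x + \<delta>} q"
  shows "R \<le> u \<or> u + 2 * \<delta> * real n \<le> -R \<Longrightarrow> real n \<le> integral {u..u + 2 * \<delta> * real n} q"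
proof (induction n)
  case (Suc n)
  define c where "c = u + 2 * \<delta> * real n + \<delta>"
  have step: "2 * \<delta> * real (Suc n) = 2 * \<delta> * real n + 2 * \<delta>" "0 \<le> 2 * \<delta> * real n"
    using \<delta> by (simp_all add: algebra_simps)
  have "R \<le> u \<or> u + 2 * \<delta> * real n \<le> -R"
    using Suc.prems step \<delta> by linarith
  then have "real n \<le> integral {u..u + 2 * \<delta> * real n} q"
    by (rule Suc.IH)
  moreover have "R \<le> c \<or> c \<le> -R"
    using Suc.prems step \<delta> unfolding c_def by linarith
  then have "R \<le> \<bar>c\<bar>"
    by linarith
  then have "1 \<le> integral {c - \<delta>..c + \<delta>} q"
    by (rule window)
  moreover have "integral {u..u + 2 * \<delta> * real n} q + integral {c - \<delta>..c + \<delta>} q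
      = integral {u..u + 2 * \<delta> * real (Suc n)} q"
    using Henstock_Kurzweil_Integration.integral_combine[OF _ _ q_int] step \<delta>
    unfolding c_def by (simp add: algebra_simps)
  ultimately show ?case
    by simp
qed simp

lemma integral_ge_linear_one_side:
  fixes q :: "real \<Rightarrow> real"
  assumes q_nonneg: "\<forall>x. 0 \<le> q x" and q_int: "\<And>a b. q integrable_on {a..b}"
    and \<delta>: "0 < \<delta>" and window: "\<And>x. R \<le> \<bar>x\<bar> \<Longrightarrow> 1 \<le> integral {x - \<delta>..x + \<delta>} q"
    and uv: "u \<le> v" "R \<le> u \<or> v \<le> -R"
  shows "(v - u) / (2 * \<delta>) - 1 \<le> integral {u..v} q"
proof -
  define n where "n = nat \<lfloor>(v - u) / (2 * \<delta>)\<rfloor>"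
  have "real n = of_int \<lfloor>(v - u) / (2 * \<delta>)\<rfloor>"
    using uv \<delta> unfolding n_def by simp
  then have n: "real n \<le> (v - u) / (2 * \<delta>)" "(v - u) / (2 * \<delta>) < real n + 1"
    by linarith+
  then have n_le: "2 * \<delta> * real n \<le> v - u"
    using \<delta> by (simp add: field_simps)
  have "real n \<le> integral {u..u + 2 * \<delta> * real n} q"
    by (rule integral_ge_number_of_blocks[OF q_nonneg q_int _ window]) (use \<delta> uv n_le in auto)
  also have "\<dots> \<le> integral {u..v} q"
    by (rule integral_subset_le) (use n_le q_int q_nonneg in auto)
  finally show ?thesis
    using n by linarith
qed

text \<open>Slope 2K on both sides of [-R, R] pays for the gap of length 2R; this is where the
  threshold 3R + 1/K comes from.\<close>

lemma integral_ge_linear: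
  fixes q :: "real \<Rightarrow> real"
  assumes q_nonneg: "\<forall>x. 0 \<le> q x" and q_int: "\<And>a b. q integrable_on {a..b}"
    and K: "0 < K" and R: "0 \<le> R"
    and one_side: "\<And>u v. u \<le> v \<Longrightarrow> R \<le> u \<or> v \<le> -R \<Longrightarrow> 2 * K * (v - u) - 1 \<le> integral {u..v} q"
    and x: "3 * R + 1 / K \<le> \<bar>x\<bar>" and T: "x \<le> T"
  shows "K * (T - x) - 1 \<le> integral {x..T} q"
proof -
  have nonneg: "0 \<le> integral {a..b} q" for a b
    using q_nonneg q_int by (intro integral_nonneg) auto
  have combine: "integral {a..c} q + integral {c..b} q = integral {a..b} q" if "a \<le> c" "c \<le> b" for a b c
    using Henstock_Kurzweil_Integration.integral_combine[OF that q_int] .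
  have K_mono: "K * a \<le> K * b" if "a \<le> b" for a b
    using K that by simp
  have "0 < 1 / K" and K_inv: "K * (1 / K) = 1"
    using K by auto
  consider "R \<le> x" | "T \<le> -R" | "x \<le> -R" "-R \<le> T" "T \<le> R" | "x \<le> -R" "R \<le> T"
    using x R \<open>0 < 1 / K\<close> by linarith
  then show ?thesis
  proof cases
    case 3
    have "\<bar>x\<bar> = -x"
      using 3 R by simp
    then have "T - x \<le> 2 * (-R - x)"
      using 3 x \<open>0 < 1 / K\<close> by argo
    then have "K * (T - x) \<le> K * (2 * (-R - x))"
      by (rule K_mono)
    then have "K * (T - x) - 1 \<le> 2 * K * (-R - x) - 1"
      by (simp add: algebra_simps)
    also have "\<dots> \<le> integral {x..-R} q"
      using one_side[of x "-R"] 3 by simp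
    also have "\<dots> \<le> integral {x..T} q"
      using combine[of x "-R" T] nonneg[of "-R" T] 3 by linarith
    finally show ?thesis .
  next
    case 4
    have "\<bar>x\<bar> = -x"
      using 4 R by simp
    then have "4 * R + 1 / K \<le> T - x"
      using 4 x by linarith
    then have "K * (4 * R + 1 / K) \<le> K * (T - x)"
      by (rule K_mono)
    then have "4 * K * R + 1 \<le> K * (T - x)"
      using K_inv by (simp add: algebra_simps)
    then have "K * (T - x) - 1 \<le> 2 * K * (-R - x) - 1 + (2 * K * (T - R) - 1)"
      by (simp add: algebra_simps)
    also have "\<dots> \<le> integral {x..-R} q + integral {R..T} q"
      using one_side[of x "-R"] one_side[of R T] 4 R by simp
    also have "\<dots> \<le> integral {x..T} q"
      using combine[of x "-R" T] combine[of "-R" R T] nonneg[of "-R" R] 4 R by linarith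
    finally show ?thesis .
  qed (use one_side[OF T] K_mono[of 0 "T - x"] T in force)+
qed

lemma integral_ge_linear_far_out:
  fixes q :: "real \<Rightarrow> real"
  assumes q_nonneg: "\<forall>x. 0 \<le> q x" and q_loc: "loc_int q"
    and windows: "\<And>\<delta>. 0 < \<delta> \<Longrightarrow> eventually (\<lambda>x. 1 \<le> integral {x - \<delta>..x + \<delta>} q) at_infinity"
    and K: "0 < K"
  shows "\<exists>x0. \<forall>x T. x0 \<le> \<bar>x\<bar> \<longrightarrow> x \<le> T \<longrightarrow> K * (T - x) - 1 \<le> integral {x..T} q"
proof -
  note q_int = loc_int_integrable_on(1)[OF q_loc]
  define \<delta> where "\<delta> = 1 / (4 * K)"
  have \<delta>: "0 < \<delta>" "\<And>a. a / (2 * \<delta>) = 2 * K * a"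
    using K by (simp_all add: \<delta>_def field_simps)
  obtain R0 where R0: "\<And>x. R0 \<le> \<bar>x\<bar> \<Longrightarrow> 1 \<le> integral {x - \<delta>..x + \<delta>} q"
    using windows[OF \<delta>(1)] unfolding eventually_at_infinity real_norm_def by blast
  define R where "R = max R0 0"
  have window: "1 \<le> integral {x - \<delta>..x + \<delta>} q" if "R \<le> \<bar>x\<bar>" for x
    using R0 that unfolding R_def by simp
  have one_side: "2 * K * (v - u) - 1 \<le> integral {u..v} q" if "u \<le> v" "R \<le> u \<or> v \<le> -R" for u v
    using integral_ge_linear_one_side[OF q_nonneg q_int \<delta>(1) window that] \<delta>(2) by simp
  have "0 \<le> R"
    by (simp add: R_def)
  then show ?thesis
    using integral_ge_linear[OF q_nonneg q_int K _ one_side] by blast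
qed

lemma le_powr_young:
  fixes r \<eta> y :: real
  assumes r: "1 < r" and \<eta>: "0 < \<eta>" and y: "0 \<le> y"
  shows "y \<le> \<eta> * y powr r + (1 / \<eta>) powr (1 / (r - 1))"
proof -
  define B where "B = (1 / \<eta>) powr (1 / (r - 1))"
  have "0 < B"
    using \<eta> by (simp add: B_def)
  show ?thesis
  proof (cases "y \<le> B")
    case True
    then show ?thesis
      using \<eta> by (simp add: B_def add_increasing)
  next
    case False
    have "1 / \<eta> = B powr (r - 1)"
      using r \<eta> by (simp add: B_def powr_powr)
    also have "\<dots> < y powr (r - 1)"
      using False \<open>0 < B\<close> r by (intro powr_less_mono2) auto
    finally have "1 < \<eta> * y powr (r - 1)"
      using \<eta> by (simp add: field_simps)
    then have "y < \<eta> * y powr (r - 1) * y"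
      using False \<open>0 < B\<close> by simp
    also have "\<dots> = \<eta> * y powr r"
      using y by (simp add: powr_add[of y "r - 1" 1, simplified] mult.assoc)
    finally show ?thesis
      using \<open>0 < B\<close> unfolding B_def by linarith
  qed
qed

lemma in_Lp_loc_int:
  assumes p: "1 < p" and f: "in_Lp p f"
  shows "loc_int f"
  unfolding loc_int_def
proof (intro allI)
  fix a b :: real
  show "set_integrable lborel {a..b} f"
  proof (cases "p = \<infinity>")
    case True
    then have "continuous_on {a..b} f"
      using f continuous_on_subset unfolding in_Lp_def by fastforce
    then show ?thesis
      by (rule borel_integrable_atLeastAtMost')
  next
    case False
    then obtain r where pr: "p = ereal r"
      using p by (cases p) auto
    have r: "1 < r"
      using p pr by simp
    have f_meas: "f \<in> borel_measurable lborel" and f_int: "integrable lborel (\<lambda>x. \<bar>f x\<bar> powr r)"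
      using f False pr by (auto simp: in_Lp_def)
    have "set_integrable lborel {a..b} (\<lambda>x. \<bar>f x\<bar> powr r)"
      unfolding set_integrable_def by (rule integrable_mult_indicator) (use f_int in auto)
    then have "set_integrable lborel {a..b} (\<lambda>x. \<bar>f x\<bar> powr r + 1)"
      using set_integral_add(1) borel_integrable_atLeastAtMost'[OF continuous_on_const] by blast
    then show ?thesis
    proof (rule set_integrable_bound)
      show "set_borel_measurable lborel {a..b} f"
        unfolding set_borel_measurable_def using f_meas by measurable
      show "AE x in lborel. x \<in> {a..b} \<longrightarrow> norm (f x) \<le> norm (\<bar>f x\<bar> powr r + 1)"
        using le_powr_young[OF r zero_less_one abs_ge_zero] by simp
    qed
  qed
qed

lemma abs_le_Lp_norm_infinity:
  assumes "in_Lp \<infinity> f"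
  shows "\<bar>f x\<bar> \<le> Lp_norm \<infinity> f"
proof -
  have "bdd_above (range (\<lambda>x. \<bar>f x\<bar>))"
    using assms unfolding in_Lp_def bounded_iff bdd_above_def by auto
  from cSUP_upper[OF UNIV_I this] show ?thesis
    by (simp add: Lp_norm_def)
qed

lemma integral_powr_eq_Lp_norm_powr:
  assumes "0 < r"
  shows "(LINT x|lborel. \<bar>f x\<bar> powr r) = Lp_norm (ereal r) f powr r"
  using assms by (simp add: Lp_norm_def powr_powr)

lemma Lp_unit_integral_abs_le:
  assumes p: "1 < p" and \<eta>: "0 < \<eta>"
  obtains B where "0 < B"
    "\<And>f a b. in_Lp p f \<Longrightarrow> Lp_norm p f = 1 \<Longrightarrow> a \<le> b
      \<Longrightarrow> integral {a..b} (\<lambda>t. \<bar>f t\<bar>) \<le> \<eta> + B * (b - a)"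
proof (cases "p = \<infinity>")
  case True
  show thesis
  proof (rule that[of 1])
    fix f and a b :: real
    assume f: "in_Lp p f" "Lp_norm p f = 1" and ab: "a \<le> b"
    have "integral {a..b} (\<lambda>t. \<bar>f t\<bar>) \<le> integral {a..b} (\<lambda>t. 1)"
      using abs_le_Lp_norm_infinity[of f] loc_int_integrable_on(2)[OF in_Lp_loc_int[OF p f(1)]]
        f True by (intro integral_le) auto
    then show "integral {a..b} (\<lambda>t. \<bar>f t\<bar>) \<le> \<eta> + 1 * (b - a)"
      using ab \<eta> by simp
  qed simp
next
  case False
  then obtain r where pr: "p = ereal r"
    using p by (cases p) auto
  have r: "1 < r"
    using p pr by simp
  define B where "B = (1 / \<eta>) powr (1 / (r - 1))"
  show thesis
  proof (rule that[of B])
    show "0 < B"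
      using \<eta> by (simp add: B_def)
    fix f and a b :: real
    assume f: "in_Lp p f" "Lp_norm p f = 1" and ab: "a \<le> b"
    have f_int: "integrable lborel (\<lambda>x. \<bar>f x\<bar> powr r)"
      using f pr r by (simp add: in_Lp_def)
    note fr_int = integral_Icc_le_integral_lborel[OF f_int powr_ge_zero, of a b]
    have "integral {a..b} (\<lambda>x. \<bar>f x\<bar> powr r) \<le> (LINT x|lborel. \<bar>f x\<bar> powr r)"
      using fr_int by simp
    also have "\<dots> = 1"
      using integral_powr_eq_Lp_norm_powr[of r f] f(2) pr r by simp
    finally have fr_le: "integral {a..b} (\<lambda>x. \<bar>f x\<bar> powr r) \<le> 1" .
    have bound_int: "(\<lambda>x. \<eta> * \<bar>f x\<bar> powr r + B) integrable_on {a..b}"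
      using fr_int(1) by (intro integrable_add integrable_on_mult_right integrable_const_ivl)
    have "integral {a..b} (\<lambda>t. \<bar>f t\<bar>) \<le> integral {a..b} (\<lambda>x. \<eta> * \<bar>f x\<bar> powr r + B)"
      using le_powr_young[OF r \<eta> abs_ge_zero] loc_int_integrable_on(2)[OF in_Lp_loc_int[OF p f(1)]]
        bound_int
      unfolding B_def by (intro integral_le) auto
    also have "\<dots> = \<eta> * integral {a..b} (\<lambda>x. \<bar>f x\<bar> powr r) + B * (b - a)"
      using integral_add[OF integrable_on_mult_right[OF fr_int(1)] integrable_const_ivl] ab
      by (simp add: integral_mult_right)
    also have "\<dots> \<le> \<eta> + B * (b - a)"
      using fr_le \<eta> by simp
    finally show "integral {a..b} (\<lambda>t. \<bar>f t\<bar>) \<le> \<eta> + B * (b - a)" .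
  qed
qed

lemma loc_int_uminus:
  assumes "loc_int f"
  shows "loc_int (\<lambda>t. - f t)"
proof -
  have "set_integrable lborel {a..b} (\<lambda>t. (-1) * f t)" for a b
    using assms unfolding loc_int_def by (intro set_integrable_mult_right) auto
  then show ?thesis
    unfolding loc_int_def by simp
qed

lemma is_solution_uminus:
  assumes "is_solution q f y"
  shows "is_solution q (\<lambda>t. - f t) (\<lambda>t. - y t)"
proof -
  have eq: "(\<lambda>t. q t * - y t - - f t) = (\<lambda>t. - (q t * y t - f t))"
    by auto
  have "loc_int (\<lambda>t. q t * - y t - - f t)"
    using assms loc_int_uminus unfolding is_solution_def eq by blast
  moreover have "(- y b) - (- y a) = (LBINT t:{a..b}. q t * - y t - - f t)" if "a \<le> b" for a b
  proof -
    have "y b - y a = (LBINT t:{a..b}. q t * y t - f t)"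
      using assms that unfolding is_solution_def by blast
    then show ?thesis
      using assms set_integral_uminus[of lborel "{a..b}" "\<lambda>t. q t * y t - f t"]
      unfolding is_solution_def loc_int_def eq by simp
  qed
  ultimately show ?thesis
    unfolding is_solution_def by blast
qed

lemma is_solution_integral:
  assumes "is_solution q f y"
  shows "(\<lambda>t. q t * y t - f t) integrable_on {a..b}"
    and "a \<le> b \<Longrightarrow> y b - y a = integral {a..b} (\<lambda>t. q t * y t - f t)"
  using assms loc_int_integrable_on[of "\<lambda>t. q t * y t - f t"] unfolding is_solution_def by auto

lemma is_solution_continuous:
  assumes "is_solution q f y"
  shows "continuous_on UNIV y"
proof (rule continuous_at_imp_continuous_on, intro ballI)
  fix x :: real
  have "continuous_on {x - 1..x + 1} (\<lambda>t. y (x - 1) + integral {x - 1..t} (\<lambda>t. q t * y t - f t))"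
    by (intro continuous_intros indefinite_integral_continuous_1 is_solution_integral(1)[OF assms])
  moreover have "y (x - 1) + integral {x - 1..t} (\<lambda>t. q t * y t - f t) = y t"
    if "t \<in> {x - 1..x + 1}" for t
    using is_solution_integral(2)[OF assms, of "x - 1" t] that by simp
  ultimately have "continuous_on {x - 1..x + 1} y"
    by (rule continuous_on_eq)
  then show "isCont y x"
    using continuous_on_interior[of "{x - 1..x + 1}" y x] by simp
qed

lemma continuous_stays_above:
  fixes z :: "real \<Rightarrow> real"
  assumes cont: "continuous_on UNIV z" and start: "c < z x"
    and step: "\<And>T. x \<le> T \<Longrightarrow> \<forall>s\<in>{x..T}. c \<le> z s \<Longrightarrow> c < z T"
    and T: "x \<le> T"
  shows "c < z T"
proof (rule ccontr)
  assume "\<not> c < z T"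
  define S where "S = {s. x \<le> s \<and> z s \<le> c}"
  have "T \<in> S"
    using T \<open>\<not> c < z T\<close> by (simp add: S_def)
  moreover have "bdd_below S"
    unfolding S_def by (auto intro: bdd_belowI)
  moreover have "closed S"
    unfolding S_def Collect_conj_eq
    by (intro closed_Int closed_Collect_le continuous_on_const continuous_on_id cont)
  ultimately have T0: "Inf S \<in> S"
    using closed_contains_Inf by blast
  have before: "c < z s" if "x \<le> s" "s < Inf S" for s
    using cInf_lower[OF _ \<open>bdd_below S\<close>, of s] that by (force simp: S_def)
  have "x \<le> Inf S" "z (Inf S) \<le> c"
    using T0 by (auto simp: S_def)
  then obtain s where s: "x \<le> s" "s \<le> Inf S" "z s = c"
    using IVT2'[of z "Inf S" c x] start continuous_on_subset[OF cont] by fastforce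
  then have "s = Inf S"
    using before by force
  then have "\<forall>s\<in>{x..Inf S}. c \<le> z s"
    using before s by (force simp: le_less)
  then have "c < z (Inf S)"
    using step \<open>x \<le> Inf S\<close> by blast
  then show False
    using \<open>z (Inf S) \<le> c\<close> by simp
qed

lemma solution_increment_ge:
  fixes q f y :: "real \<Rightarrow> real"
  assumes q_nonneg: "\<forall>x. 0 \<le> q x" and q_loc: "loc_int q"
    and y: "is_solution q f y" and f_loc: "loc_int f"
    and T: "x \<le> T" and above: "\<forall>s\<in>{x..T}. c \<le> y s"
  shows "c * integral {x..T} q - integral {x..T} (\<lambda>t. \<bar>f t\<bar>) \<le> y T - y x"
proof -
  note q_int = loc_int_integrable_on(1)[OF q_loc] and f_int = loc_int_integrable_on(1,2)[OF f_loc]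
  have qy_int: "(\<lambda>t. q t * y t) integrable_on {x..T}"
    using integrable_add[OF is_solution_integral(1)[OF y] f_int(1)] by simp
  have "c * integral {x..T} q = integral {x..T} (\<lambda>t. c * q t)"
    by simp
  also have "\<dots> \<le> integral {x..T} (\<lambda>t. q t * y t)"
  proof (rule integral_le[OF integrable_on_mult_right[OF q_int] qy_int])
    fix t assume "t \<in> {x..T}"
    then have "c * q t \<le> y t * q t"
      using above q_nonneg by (intro mult_right_mono) auto
    then show "c * q t \<le> q t * y t"
      by (simp add: mult.commute)
  qed
  finally have "c * integral {x..T} q \<le> integral {x..T} (\<lambda>t. q t * y t)" .
  moreover have "integral {x..T} f \<le> integral {x..T} (\<lambda>t. \<bar>f t\<bar>)"
    using f_int by (intro integral_le) auto
  moreover have "y T - y x = integral {x..T} (\<lambda>t. q t * y t) - integral {x..T} f"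
    using is_solution_integral(2)[OF y T] integral_diff[OF qy_int f_int(1)] by simp
  ultimately show ?thesis
    by linarith
qed

lemma solution_lower_bound:
  fixes q f y :: "real \<Rightarrow> real"
  assumes q_nonneg: "\<forall>x. 0 \<le> q x" and q_loc: "loc_int q"
    and y: "is_solution q f y" and f_loc: "loc_int f"
    and f_small: "\<And>T. x \<le> T \<Longrightarrow> integral {x..T} (\<lambda>t. \<bar>f t\<bar>) \<le> \<epsilon>/2 + \<epsilon>/4 * integral {x..T} q"
    and \<epsilon>: "0 < \<epsilon>" and start: "\<epsilon> < y x" and T: "x \<le> T"
  shows "\<epsilon>/2 + \<epsilon>/4 * integral {x..T} q \<le> y T"
proof -
  have gain_nonneg: "0 \<le> \<epsilon>/4 * integral {x..T} q" for T
    using q_nonneg loc_int_integrable_on(1)[OF q_loc] \<epsilon> by (intro integral_nonneg mult_nonneg_nonneg) auto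
  have energy: "y x - \<epsilon>/2 + \<epsilon>/4 * integral {x..T} q \<le> y T"
    if "x \<le> T" "\<forall>s\<in>{x..T}. \<epsilon>/2 \<le> y s" for T
    using solution_increment_ge[OF q_nonneg q_loc y f_loc that] f_small[OF that(1)] by linarith
  have "\<epsilon>/2 < y s" if "x \<le> s" for s
  proof (rule continuous_stays_above[OF is_solution_continuous[OF y] _ _ that])
    show "\<epsilon>/2 < y x"
      using start \<epsilon> by linarith
    show "\<epsilon>/2 < y T" if "x \<le> T" "\<forall>s\<in>{x..T}. \<epsilon>/2 \<le> y s" for T
      using energy[OF that] gain_nonneg[of T] start by linarith
  qed
  then have "\<forall>s\<in>{x..T}. \<epsilon>/2 \<le> y s"
    by (simp add: less_imp_le)
  then show ?thesis
    using energy[OF T] start by linarith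
qed

lemma abs_solution_lower_bound:
  fixes q f y :: "real \<Rightarrow> real"
  assumes q_nonneg: "\<forall>x. 0 \<le> q x" and q_loc: "loc_int q"
    and y: "is_solution q f y" and f_loc: "loc_int f"
    and f_small: "\<And>T. x \<le> T \<Longrightarrow> integral {x..T} (\<lambda>t. \<bar>f t\<bar>) \<le> \<epsilon>/2 + \<epsilon>/4 * integral {x..T} q"
    and \<epsilon>: "0 < \<epsilon>" and start: "\<epsilon> < \<bar>y x\<bar>" and T: "x \<le> T"
  shows "\<epsilon>/2 + \<epsilon>/4 * integral {x..T} q \<le> \<bar>y T\<bar>"
proof (cases "\<epsilon> < y x")
  case True
  then show ?thesis
    using solution_lower_bound[OF q_nonneg q_loc y f_loc f_small \<epsilon> _ T] by linarith
next
  case False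
  then have "\<epsilon> < - y x"
    using start by linarith
  moreover have "integral {x..T} (\<lambda>t. \<bar>- f t\<bar>) \<le> \<epsilon>/2 + \<epsilon>/4 * integral {x..T} q"
    if "x \<le> T" for T
    using f_small[OF that] by simp
  ultimately have "\<epsilon>/2 + \<epsilon>/4 * integral {x..T} q \<le> - y T"
    using solution_lower_bound[OF q_nonneg q_loc is_solution_uminus[OF y] loc_int_uminus[OF f_loc]
        _ \<epsilon> _ T] by simp
  then show ?thesis
    by linarith
qed

lemma integrable_powr_abs_dips_below:
  fixes w :: "real \<Rightarrow> real"
  assumes r: "0 < r" and w: "integrable lborel (\<lambda>t. \<bar>w t\<bar> powr r)" and c: "0 < c"
  shows "\<exists>T\<ge>x. \<bar>w T\<bar> < c"
proof (rule ccontr)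
  assume "\<not> (\<exists>T\<ge>x. \<bar>w T\<bar> < c)"
  then have big: "c \<le> \<bar>w T\<bar>" if "x \<le> T" for T
    using that by fastforce
  have "real n * c powr r \<le> (LINT t|lborel. \<bar>w t\<bar> powr r)" for n :: nat
  proof -
    note w_int = integral_Icc_le_integral_lborel[OF w powr_ge_zero, of x "x + real n"]
    have "real n * c powr r = integral {x..x + real n} (\<lambda>t. c powr r)"
      by simp
    also have "\<dots> \<le> integral {x..x + real n} (\<lambda>t. \<bar>w t\<bar> powr r)"
      using big c r w_int(1) by (intro integral_le powr_mono2) auto
    also have "\<dots> \<le> (LINT t|lborel. \<bar>w t\<bar> powr r)"
      using w_int(2) by simp
    finally show ?thesis .
  qed
  moreover obtain n :: nat where "(LINT t|lborel. \<bar>w t\<bar> powr r) / c powr r < real n"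
    using reals_Archimedean2 by blast
  then have "(LINT t|lborel. \<bar>w t\<bar> powr r) < real n * c powr r"
    using c by (simp add: divide_less_eq)
  ultimately show False
    by (meson not_le)
qed

lemma Lp_solution_abs_le:
  fixes q f y :: "real \<Rightarrow> real"
  assumes p: "1 < p" and q_nonneg: "\<forall>x. 0 \<le> q x" and q_loc: "loc_int q"
    and y_Lp: "in_Lp p y" and y: "is_solution q f y" and f_loc: "loc_int f"
    and f_small: "\<And>T. x \<le> T \<Longrightarrow> integral {x..T} (\<lambda>t. \<bar>f t\<bar>) \<le> \<epsilon>/2 + \<epsilon>/4 * integral {x..T} q"
    and q_unbounded: "\<And>C. \<exists>T\<ge>x. C \<le> integral {x..T} q" and \<epsilon>: "0 < \<epsilon>"
  shows "\<bar>y x\<bar> \<le> \<epsilon>"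
proof (rule ccontr)
  assume "\<not> \<bar>y x\<bar> \<le> \<epsilon>"
  then have y_big: "\<epsilon>/2 + \<epsilon>/4 * integral {x..T} q \<le> \<bar>y T\<bar>" if "x \<le> T" for T
    using abs_solution_lower_bound[OF q_nonneg q_loc y f_loc f_small \<epsilon> _ that] by simp
  have Q_nonneg: "0 \<le> integral {x..T} q" for T
    using q_nonneg loc_int_integrable_on(1)[OF q_loc] by (intro integral_nonneg) auto
  show False
  proof (cases "p = \<infinity>")
    case True
    then obtain M where M: "\<And>t. \<bar>y t\<bar> \<le> M"
      using y_Lp unfolding in_Lp_def bounded_iff by auto
    obtain T where "x \<le> T" "4 * M / \<epsilon> + 1 \<le> integral {x..T} q"
      using q_unbounded by blast
    then have "\<epsilon>/4 * (4 * M / \<epsilon> + 1) \<le> \<epsilon>/4 * integral {x..T} q"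
      using \<epsilon> by (intro mult_left_mono) auto
    then have "M < \<epsilon>/4 * integral {x..T} q"
      using \<epsilon> by (simp add: algebra_simps)
    then show False
      using y_big[OF \<open>x \<le> T\<close>] M[of T] \<epsilon> by linarith
  next
    case False
    then obtain r where pr: "p = ereal r"
      using p by (cases p) auto
    have "integrable lborel (\<lambda>t. \<bar>y t\<bar> powr r)"
      using y_Lp False pr by (simp add: in_Lp_def)
    then obtain T where "x \<le> T" "\<bar>y T\<bar> < \<epsilon>/2"
      using integrable_powr_abs_dips_below[of r y "\<epsilon>/2" x] p pr \<epsilon> by auto
    moreover have "0 \<le> \<epsilon>/4 * integral {x..T} q"
      using Q_nonneg[of T] \<epsilon> by simp
    ultimately show False
      using y_big[of T] by linarith
  qed
qed

lemma tend_in_whole_to_zero_if_integral_ge_linear: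
  fixes q :: "real \<Rightarrow> real"
  assumes p: "1 < p" and q_nonneg: "\<forall>x. 0 \<le> q x" and q_loc: "loc_int q"
    and growth: "\<And>K. 0 < K \<Longrightarrow>
      \<exists>x0. \<forall>x T. x0 \<le> \<bar>x\<bar> \<longrightarrow> x \<le> T \<longrightarrow> K * (T - x) - 1 \<le> integral {x..T} q"
  shows "tend_in_whole_to_zero p q"
  unfolding tend_in_whole_to_zero_def
proof (intro allI impI)
  fix \<epsilon> :: real
  assume \<epsilon>: "0 < \<epsilon>"
  obtain B where B: "0 < B" and f_bound: "\<And>f a b. in_Lp p f \<Longrightarrow> Lp_norm p f = 1 \<Longrightarrow> a \<le> b
      \<Longrightarrow> integral {a..b} (\<lambda>t. \<bar>f t\<bar>) \<le> \<epsilon>/4 + B * (b - a)"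
    using Lp_unit_integral_abs_le[OF p, of "\<epsilon>/4"] \<epsilon> by auto
  define K where "K = 4 * B / \<epsilon>"
  have K: "0 < K" and B_eq: "\<epsilon>/4 * (K * a - 1) = B * a - \<epsilon>/4" for a
    using B \<epsilon> by (auto simp: K_def algebra_simps)
  obtain x0 where x0: "\<And>x T. x0 \<le> \<bar>x\<bar> \<Longrightarrow> x \<le> T \<Longrightarrow> K * (T - x) - 1 \<le> integral {x..T} q"
    using growth[OF K] by blast
  show "\<exists>x0. \<forall>y\<in>D_set p q. \<forall>x. x0 \<le> \<bar>x\<bar> \<longrightarrow> \<bar>y x\<bar> \<le> \<epsilon>"
  proof (intro exI ballI allI impI)
    fix y x
    assume "y \<in> D_set p q" and x: "x0 \<le> \<bar>x\<bar>"
    then obtain f where y_Lp: "in_Lp p y" and f: "in_Lp p f" "Lp_norm p f = 1"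
      and y: "is_solution q f y"
      unfolding D_set_def by blast
    show "\<bar>y x\<bar> \<le> \<epsilon>"
    proof (rule Lp_solution_abs_le[OF p q_nonneg q_loc y_Lp y in_Lp_loc_int[OF p f(1)] _ _ \<epsilon>])
      fix T assume "x \<le> T"
      have "\<epsilon>/4 * (K * (T - x) - 1) \<le> \<epsilon>/4 * integral {x..T} q"
        using x0[OF x \<open>x \<le> T\<close>] \<epsilon> by (intro mult_left_mono) auto
      then show "integral {x..T} (\<lambda>t. \<bar>f t\<bar>) \<le> \<epsilon>/2 + \<epsilon>/4 * integral {x..T} q"
        using f_bound[OF f \<open>x \<le> T\<close>] B_eq[of "T - x"] by linarith
    next
      fix C
      show "\<exists>T\<ge>x. C \<le> integral {x..T} q"
        using x0[OF x, of "x + (\<bar>C\<bar> + 1) / K"] K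
        by (intro exI[of _ "x + (\<bar>C\<bar> + 1) / K"]) auto
    qed
  qed
qed

theorem corollary5p2:
  fixes q q1 q2 :: "real \<Rightarrow> real" and p :: ereal
  assumes q_nonneg: "\<forall>x. q x \<ge> 0"
    and q_loc: "loc_int q"
    and q_inf: "\<exists>a>0. (INF x. (LBINT t:{x-a..x+a}. q t)) > 0"
    and q1_pos: "\<forall>x. q1 x > 0"
    and q1_cont: "continuous_on UNIV q1"
    and q2_loc: "loc_int q2"
    and q_split: "AE x in lborel. q x = q1 x + q2 x"
    and sigma1_lim: "(sigma1 q1 \<longlongrightarrow> 0) at_infinity"
    and sigma2_lim: "(sigma2 q1 q2 \<longlongrightarrow> 0) at_infinity"
    and q1_inf: "filterlim q1 at_top at_infinity"
    and p_gt: "1 < p"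
  shows "tend_in_whole_to_zero p q"
proof (rule tend_in_whole_to_zero_if_integral_ge_linear[OF p_gt q_nonneg q_loc])
  fix K :: real
  assume "0 < K"
  show "\<exists>x0. \<forall>x T. x0 \<le> \<bar>x\<bar> \<longrightarrow> x \<le> T \<longrightarrow> K * (T - x) - 1 \<le> integral {x..T} q"
    by (rule integral_ge_linear_far_out[OF q_nonneg q_loc
          eventually_integral_interval_ge_one[OF q_nonneg q_loc q1_pos q1_cont q2_loc q_split
            sigma1_lim sigma2_lim q1_inf] \<open>0 < K\<close>])
qed

end
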